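(* Let $a,b,e\in\mathbb Z$ with $a\neq0$, $e>0$, such that $h_2(j)=aj^2+bj+e$ satisfies $h_2(j)\ge 0$ for all integers $j\ge0$. Let $\alpha=a/e$, $\beta=b/e$ and $$f(x)=\tfrac12x^2-\left(\alpha+\beta+\tfrac32\right)x+(5\alpha+3\beta+2).$$ Assume $\alpha+\beta\ge 2$. If there exists an integer $d$ with $3\le d\le c(h_2)+1$ and $f(d)<0$, then $\operatorname{hdepth}(h_2)<d$.
   Context: Let $\mathcal H_0$ denote the set of functions $h:\mathbb Z_{\ge 0}\to\mathbb Z_{\ge 0}$ with $h(0)>0$. For $h\in\mathcal H_0$ and integers $0\le k\le d$, put $\beta_k^d(h)=\sum_{j=0}^k(-1)^{k-j}\binom{d-j}{k-j}h(j)$. The Hilbert depth of $h$ is $\operatorname{hdepth}(h)=\max\{d\in\mathbb Z_{\ge0}:\ \beta_k^d(h)\ge 0\text{ for all }0\le k\le d\}$; this set contains $d=0$ and is known to be bounded above by $c(h):=\lfloor h(1)/h(0)\rfloor$, so the maximum exists. *)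

theory Defs
  imports Complex_Main
begin

definition hbeta :: "(nat \<Rightarrow> nat) \<Rightarrow> nat \<Rightarrow> nat \<Rightarrow> int" where
  "hbeta h d k = (\<Sum>j\<le>k. (-1) ^ (k - j) * int ((d - j) choose (k - j)) * int (h j))"

definition hdepth :: "(nat \<Rightarrow> nat) \<Rightarrow> nat" where
  "hdepth h = Max {d. \<forall>k\<le>d. hbeta h d k \<ge> 0}"

definition cbound :: "(nat \<Rightarrow> nat) \<Rightarrow> nat" where
  "cbound h = h 1 div h 0"

definition fquad :: "real \<Rightarrow> real \<Rightarrow> real \<Rightarrow> real" where
  "fquad \<alpha> \<beta> x = x^2 / 2 - (\<alpha> + \<beta> + 3/2) * x + (5 * \<alpha> + 3 * \<beta> + 2)"

end

theory Submission
  imports Defs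
begin

text \<open>The coefficients \<open>\<beta>\<^sub>k\<^sup>d\<close> satisfy a Pascal-type recursion in \<open>d\<close>, which makes
  nonnegativity of all \<open>\<beta>\<^sub>k\<^sup>d\<close> inherited by smaller \<open>d\<close>. Hence a single negative
  \<open>\<beta>\<^sub>k\<^sup>d\<close> bounds the Hilbert depth by \<open>d\<close>. For a quadratic \<open>h\<close> one computes
  \<open>\<beta>\<^sub>2\<^sup>d(h) = e \<cdot> f(d)\<close>, so \<open>f(d) < 0\<close> gives exactly such a negative coefficient.\<close>

lemma hbeta_Suc_Suc:
  assumes "k < d"
  shows "hbeta h d (Suc k) = hbeta h (Suc d) (Suc k) + hbeta h d k"
proof -
  have Suc_d: "hbeta h (Suc d) (Suc k) =
      (\<Sum>j\<le>k. (-1) ^ (Suc k - j) * int ((Suc d - j) choose (Suc k - j)) * int (h j)) + int (h (Suc k))"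
    unfolding hbeta_def by simp
  have d: "hbeta h d (Suc k) =
      (\<Sum>j\<le>k. (-1) ^ (Suc k - j) * int ((d - j) choose (Suc k - j)) * int (h j)) + int (h (Suc k))"
    unfolding hbeta_def by simp
  have "(\<Sum>j\<le>k. (-1) ^ (Suc k - j) * int ((Suc d - j) choose (Suc k - j)) * int (h j))
      = (\<Sum>j\<le>k. (-1) ^ (Suc k - j) * int ((d - j) choose (Suc k - j)) * int (h j)) - hbeta h d k"
    unfolding hbeta_def sum_subtractf[symmetric]
  proof (rule sum.cong)
    fix j assume "j \<in> {..k}"
    with assms have "Suc k - j = Suc (k - j)" "Suc d - j = Suc (d - j)" by auto
    then show "(-1) ^ (Suc k - j) * int ((Suc d - j) choose (Suc k - j)) * int (h j) =
        (-1) ^ (Suc k - j) * int ((d - j) choose (Suc k - j)) * int (h j) -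
        (-1) ^ (k - j) * int ((d - j) choose (k - j)) * int (h j)"
      by (simp only: binomial_Suc_Suc) (simp add: algebra_simps)
  qed simp
  with Suc_d d show ?thesis by simp
qed

lemma hbeta_nonneg_Suc_imp:
  assumes "\<forall>k\<le>Suc d. hbeta h (Suc d) k \<ge> 0"
  shows "\<forall>k\<le>d. hbeta h d k \<ge> 0"
proof (intro allI impI)
  fix k assume "k \<le> d"
  then show "hbeta h d k \<ge> 0"
  proof (induction k)
    case 0
    then show ?case by (simp add: hbeta_def)
  next
    case (Suc k)
    then have "hbeta h d (Suc k) = hbeta h (Suc d) (Suc k) + hbeta h d k"
      by (intro hbeta_Suc_Suc) simp
    with assms Suc show ?case by simp
  qed
qed

lemma hbeta_nonneg_antimono:
  assumes "d \<le> D" and "\<forall>k\<le>D. hbeta h D k \<ge> 0"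
  shows "\<forall>k\<le>d. hbeta h d k \<ge> 0"
  using assms
proof (induction D rule: dec_induct)
  case (step n)
  then show ?case using hbeta_nonneg_Suc_imp by blast
qed simp

lemma hdepth_less_if_hbeta_neg:
  assumes "k \<le> d" and "hbeta h d k < 0"
  shows "hdepth h < d"
proof -
  let ?S = "{D. \<forall>k\<le>D. hbeta h D k \<ge> 0}"
  have "?S \<subseteq> {..<d}"
  proof
    fix D assume "D \<in> ?S"
    show "D \<in> {..<d}"
    proof (rule ccontr)
      assume "D \<notin> {..<d}"
      with \<open>D \<in> ?S\<close> have "\<forall>k\<le>d. hbeta h d k \<ge> 0"
        using hbeta_nonneg_antimono[of d D h] by simp
      with assms show False by force
    qed
  qed
  moreover have "0 \<in> ?S" by (simp add: hbeta_def)
  ultimately have "Max ?S \<in> {..<d}"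
    by (intro subsetD[OF _ Max_in]) (auto intro: finite_subset)
  then show ?thesis unfolding hdepth_def by simp
qed

lemma hbeta_two:
  "hbeta h d 2 = int (d choose 2) * int (h 0) - int (d - 1) * int (h 1) + int (h 2)"
  unfolding hbeta_def by (simp add: numeral_2_eq_2)

lemma real_choose_two: "real (n choose 2) = real n * (real n - 1) / 2"
  by (simp add: binomial_gbinomial gbinomial_pochhammer pochhammer_Suc_prod numeral_2_eq_2
      of_nat_diff algebra_simps)

lemma hbeta_two_quadratic:
  fixes a b e :: int
  assumes "e > 0" and "\<forall>j::nat. a * (int j)^2 + b * int j + e \<ge> 0" and "d \<ge> 1"
  shows "real_of_int (hbeta (\<lambda>j. nat (a * (int j)^2 + b * int j + e)) d 2)
    = real_of_int e * fquad (real_of_int a / real_of_int e) (real_of_int b / real_of_int e) (real d)"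
proof -
  let ?h = "\<lambda>j. nat (a * (int j)^2 + b * int j + e)"
  have "int (?h 1) = a + b + e" "int (?h 2) = 4*a + 2*b + e"
    using assms(2)[rule_format, of 1] assms(2)[rule_format, of 2] by simp_all
  then have "real (?h 1) = a + b + e" "real (?h 2) = 4*a + 2*b + e"
    by (metis of_int_of_nat_eq of_int_add of_int_mult of_int_numeral)+
  moreover have "real (?h 0) = e" using assms(1) by simp
  ultimately have "real_of_int (hbeta ?h d 2)
      = real d * (real d - 1) / 2 * e - (real d - 1) * (a + b + e) + (4*a + 2*b + e)"
    unfolding hbeta_two using assms(3)
    by (simp add: real_choose_two of_nat_diff del: One_nat_def)
  also have "\<dots> = real_of_int e * fquad (real_of_int a / real_of_int e) (real_of_int b / real_of_int e) (real d)"
    using assms(1) unfolding fquad_def by (simp add: field_simps power2_eq_square)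
  finally show ?thesis .
qed

text \<open>Only \<open>e > 0\<close>, nonnegativity of \<open>h\<^sub>2\<close>, \<open>d \<ge> 2\<close> and \<open>f(d) < 0\<close> are needed.\<close>

theorem lemma2p3:
  fixes a b e :: int and d :: nat
  assumes "a \<noteq> 0" and "e > 0"
    and "\<forall>j::nat. a * (int j)^2 + b * int j + e \<ge> 0"
    and "real_of_int a / real_of_int e + real_of_int b / real_of_int e \<ge> 2"
    and "3 \<le> d"
    and "d \<le> cbound (\<lambda>j. nat (a * (int j)^2 + b * int j + e)) + 1"
    and "fquad (real_of_int a / real_of_int e) (real_of_int b / real_of_int e) (real d) < 0"
  shows "hdepth (\<lambda>j. nat (a * (int j)^2 + b * int j + e)) < d"
proof (rule hdepth_less_if_hbeta_neg)
  show "2 \<le> d" using assms(5) by simp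
  have "real_of_int (hbeta (\<lambda>j. nat (a * (int j)^2 + b * int j + e)) d 2) < 0"
    using hbeta_two_quadratic[OF assms(2,3)] assms(2,5,7) by (simp add: mult_pos_neg)
  then show "hbeta (\<lambda>j. nat (a * (int j)^2 + b * int j + e)) d 2 < 0" by simp
qed

end
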